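(* Let $\Sigma=(X,\mathcal{S},\phi)$ be a forward complete dynamical system. Let $t_1>0$, $G_0>0$, and let $\beta$ be a function of class $\mathcal{K}_\infty$ such that $\limsup_{r\downarrow 0}\frac{\beta(r)}{r}<+\infty$ and $$\|\phi(t,x,\sigma)\|\le G_0\,\beta(\|x\|)\quad \text{for all } t\in[0,t_1],\ x\in X,\ \sigma\in\mathcal{S}.$$ Then the following statements are equivalent: (i) $\Sigma$ is USGES; (ii) for every $p>0$ there exists a nondecreasing function $k:\mathbb{R}_+\to\mathbb{R}_+$ such that $$\int_0^{+\infty}\|\phi(t,x,\sigma)\|^p\,dt\le k(\|x\|)^p\|x\|^p\quad\text{for all } x\in X,\ \sigma\in\mathcal{S};$$ (iii) there exist $p>0$ and a nondecreasing function $k:\mathbb{R}_+\to\mathbb{R}_+$ such that the inequality in (ii) holds for all $x\in X$ and $\sigma\in\mathcal{S}$.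
   Context: $(X,\|\cdot\|)$ is a Banach space and $B_X(x,r)$ denotes the closed ball of center $x$ and radius $r$. A function $\alpha:\mathbb{R}_+\to\mathbb{R}_+$ is of class $\mathcal{K}$ if it is continuous, increasing and $\alpha(0)=0$; of class $\mathcal{K}_\infty$ if moreover unbounded. Let $\mathcal{Q}$ be a nonempty set and $\mathcal{S}$ a set of functions $\sigma:\mathbb{R}_+\to\mathcal{Q}$ which is closed by time-shift (for $\sigma\in\mathcal{S}$, $\tau\ge0$, the function $\mathbb{T}_\tau\sigma:s\mapsto\sigma(\tau+s)$ is in $\mathcal{S}$) and closed by concatenation (for $\sigma_1,\sigma_2\in\mathcal{S}$, $\tau>0$, the function equal to $\sigma_1$ on $[0,\tau]$ and with $\sigma(\tau+t)=\sigma_2(t)$ for $t>0$ is in $\mathcal{S}$). A triple $\Sigma=(X,\mathcal{S},\phi)$ with $\phi:\mathbb{R}_+\times X\times\mathcal{S}\to X$ is a forward complete dynamical system if: (i) $\phi(0,x,\sigma)=x$; (ii) if $\tilde\sigma=\sigma$ on $[0,t]$ then $\phi(t,x,\tilde\sigma)=\phi(t,x,\sigma)$; (iii) $t\mapsto\phi(t,x,\sigma)$ is continuous; (iv) $\phi(\tau,\phi(t,x,\sigma),\mathbb{T}_t\sigma)=\phi(t+\tau,x,\sigma)$ for all $t,\tau\ge0$, $x\in X$, $\sigma\in\mathcal{S}$. $\Sigma$ is uniformly semi-globally exponentially stable at the origin (USGES) if for every $r>0$ there exist $M(r)>0$, $\lambda(r)>0$ such that $\|\phi(t,x,\sigma)\|\le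 M(r)e^{-\lambda(r)t}\|x\|$ for all $t\ge0$, $x\in B_X(0,r)$, $\sigma\in\mathcal{S}$. *)

theory Defs
  imports "HOL-Analysis.Analysis" "HOL-Library.Liminf_Limsup"
begin

definition class_K :: "(real \<Rightarrow> real) \<Rightarrow> bool" where
  "class_K \<alpha> \<longleftrightarrow> continuous_on {0..} \<alpha> \<and> strict_mono_on {0..} \<alpha> \<and> \<alpha> 0 = 0
     \<and> (\<forall>r\<ge>0. \<alpha> r \<ge> 0)"

definition class_Kinf :: "(real \<Rightarrow> real) \<Rightarrow> bool" where
  "class_Kinf \<alpha> \<longleftrightarrow> class_K \<alpha> \<and> (\<forall>C. \<exists>r\<ge>0. \<alpha> r > C)"

text \<open>Input signals are functions real to 'q; only their values on [0,inf) matter.\<close>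
definition shift :: "real \<Rightarrow> (real \<Rightarrow> 'q) \<Rightarrow> (real \<Rightarrow> 'q)" where
  "shift \<tau> \<sigma> = (\<lambda>s. \<sigma> (\<tau> + s))"

definition concat_sig :: "(real \<Rightarrow> 'q) \<Rightarrow> real \<Rightarrow> (real \<Rightarrow> 'q) \<Rightarrow> (real \<Rightarrow> 'q)" where
  "concat_sig \<sigma>1 \<tau> \<sigma>2 = (\<lambda>s. if s \<le> \<tau> then \<sigma>1 s else \<sigma>2 (s - \<tau>))"

definition forward_complete_system ::
  "(real \<Rightarrow> 'q) set \<Rightarrow> (real \<Rightarrow> 'a::banach \<Rightarrow> (real \<Rightarrow> 'q) \<Rightarrow> 'a) \<Rightarrow> bool" where
  "forward_complete_system S \<phi> \<longleftrightarrow>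
     (\<forall>\<sigma>\<in>S. \<forall>\<tau>\<ge>0. shift \<tau> \<sigma> \<in> S) \<and>
     (\<forall>\<sigma>1\<in>S. \<forall>\<sigma>2\<in>S. \<forall>\<tau>>0. concat_sig \<sigma>1 \<tau> \<sigma>2 \<in> S) \<and>
     (\<forall>x. \<forall>\<sigma>\<in>S. \<phi> 0 x \<sigma> = x) \<and>
     (\<forall>t\<ge>0. \<forall>x. \<forall>\<sigma>\<in>S. \<forall>\<sigma>'\<in>S. (\<forall>s\<in>{0..t}. \<sigma>' s = \<sigma> s) \<longrightarrow> \<phi> t x \<sigma>' = \<phi> t x \<sigma>) \<and>
     (\<forall>x. \<forall>\<sigma>\<in>S. continuous_on {0..} (\<lambda>t. \<phi> t x \<sigma>)) \<and>
     (\<forall>t\<ge>0. \<forall>\<tau>\<ge>0. \<forall>x. \<forall>\<sigma>\<in>S. \<phi> \<tau> (\<phi> t x \<sigma>) (shift t \<sigma>) = \<phi> (t + \<tau>) x \<sigma>)"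

definition USGES ::
  "(real \<Rightarrow> 'q) set \<Rightarrow> (real \<Rightarrow> 'a::real_normed_vector \<Rightarrow> (real \<Rightarrow> 'q) \<Rightarrow> 'a) \<Rightarrow> bool" where
  "USGES S \<phi> \<longleftrightarrow> (\<forall>r>0. \<exists>M>0. \<exists>lam>0. \<forall>t\<ge>0. \<forall>x. norm x \<le> r \<longrightarrow>
       (\<forall>\<sigma>\<in>S. norm (\<phi> t x \<sigma>) \<le> M * exp (- lam * t) * norm x))"

definition integral_bound ::
  "(real \<Rightarrow> 'q) set \<Rightarrow> (real \<Rightarrow> 'a::real_normed_vector \<Rightarrow> (real \<Rightarrow> 'q) \<Rightarrow> 'a) \<Rightarrow> real \<Rightarrow> (real \<Rightarrow> real) \<Rightarrow> bool" where
  "integral_bound S \<phi> p k \<longleftrightarrow> (\<forall>x. \<forall>\<sigma>\<in>S.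
     (\<integral>\<^sup>+ t \<in> {0..}. ennreal (norm (\<phi> t x \<sigma>) powr p) \<partial>lborel)
       \<le> ennreal (k (norm x) powr p * norm x powr p))"

definition nondecr_nonneg :: "(real \<Rightarrow> real) \<Rightarrow> bool" where
  "nondecr_nonneg k \<longleftrightarrow> mono_on {0..} k \<and> (\<forall>r\<ge>0. k r \<ge> 0)"

end

theory Submission
  imports Defs
begin

text \<open>
  (i) \<Longrightarrow> (ii): on the ball of radius \<open>n + 1\<close> the exponential estimate integrates to
  \<open>\<integral> \<parallel>\<phi>\<parallel>\<^sup>p \<le> M\<^sup>p / (\<lambda> p) \<parallel>x\<parallel>\<^sup>p\<close>, and a staircase sum of these constants gives a
  nondecreasing \<open>k\<close>.

  (iii) \<Longrightarrow> (i): since \<open>\<integral> \<parallel>\<phi>\<parallel>\<^sup>p \<le> k(r)\<^sup>p \<parallel>x\<parallel>\<^sup>p\<close>, every time window of length \<open>t\<^sub>1\<close>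
  contains a time where \<open>\<parallel>\<phi>\<parallel> \<le> k(r) t\<^sub>1\<^sup>-\<^sup>1\<^sup>/\<^sup>p \<parallel>x\<parallel>\<close>; restarting there and using the
  short-time bound \<open>G\<^sub>0 \<beta>\<close> together with \<open>\<beta>(s) \<le> L s\<close> on bounded sets gives a uniform
  bound \<open>\<parallel>\<phi>(t,x,\<sigma>)\<parallel> \<le> C \<parallel>x\<parallel>\<close> on balls. The same integral bound then shows that after
  a time \<open>T\<close> of order \<open>(C k(r))\<^sup>p\<close> the state has at least halved, and iterating the
  halving yields exponential decay with rate \<open>ln 2 / T\<close>.
\<close>

lemma class_K_le_linear_on_bounded:
  assumes K: "class_K \<beta>" and lim: "Limsup (at_right 0) (\<lambda>r. ereal (\<beta> r / r)) < \<infinity>"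
  obtains L where "L \<ge> 0" "\<And>s. 0 \<le> s \<Longrightarrow> s \<le> R \<Longrightarrow> \<beta> s \<le> L * s"
proof -
  obtain B where "Limsup (at_right 0) (\<lambda>r. ereal (\<beta> r / r)) < ereal B"
    using lim ereal_dense2 by blast
  then have "eventually (\<lambda>r. ereal (\<beta> r / r) < ereal B) (at_right (0::real))"
    by (rule Limsup_lessD)
  then obtain d where d: "d > 0" "\<And>r. r > 0 \<Longrightarrow> r < d \<Longrightarrow> \<beta> r / r < B"
    unfolding eventually_at_right[OF zero_less_one] by auto
  have \<beta>0: "\<beta> 0 = 0" and \<beta>_nonneg: "\<And>r. r \<ge> 0 \<Longrightarrow> \<beta> r \<ge> 0"
    and \<beta>_mono: "strict_mono_on {0..} \<beta>"
    using K unfolding class_K_def by auto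
  define L where "L = max (max B 0) (\<beta> R / d)"
  have "\<beta> s \<le> L * s" if s: "0 < s" "s \<le> R" for s
  proof (cases "s < d")
    case True
    then have "\<beta> s < B * s" using d s by (simp add: divide_less_eq)
    also have "B * s \<le> L * s" using s unfolding L_def by (intro mult_right_mono) auto
    finally show ?thesis by simp
  next
    case False
    have "\<beta> s \<le> \<beta> R" using strict_mono_onD[OF \<beta>_mono, of s R] s by (cases "s = R") auto
    also have "\<dots> = (\<beta> R / d) * d" using d by simp
    also have "\<dots> \<le> (\<beta> R / d) * s" using False d \<beta>_nonneg[of R] s by (intro mult_left_mono) auto
    also have "\<dots> \<le> L * s" using s unfolding L_def by (intro mult_right_mono) auto
    finally show ?thesis .
  qed
  then have "\<beta> s \<le> L * s" if "0 \<le> s" "s \<le> R" for s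
    using that \<beta>0 by (cases "s = 0") auto
  moreover have "L \<ge> 0" unfolding L_def by simp
  ultimately show thesis using that by blast
qed

lemma nn_integral_ge_on_interval:
  fixes f :: "real \<Rightarrow> real"
  assumes "0 \<le> a" "a \<le> b" "0 \<le> c" "\<And>\<tau>. \<tau> \<in> {a..b} \<Longrightarrow> c \<le> f \<tau>"
  shows "ennreal (c * (b - a)) \<le> (\<integral>\<^sup>+ \<tau> \<in> {0..}. ennreal (f \<tau>) \<partial>lborel)"
proof -
  have "ennreal (c * (b - a)) = (\<integral>\<^sup>+ \<tau>. ennreal c * indicator {a..b} \<tau> \<partial>lborel)"
    using assms by (simp add: nn_integral_cmult_indicator ennreal_mult)
  also have "\<dots> \<le> (\<integral>\<^sup>+ \<tau> \<in> {0..}. ennreal (f \<tau>) \<partial>lborel)"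
    using assms by (intro nn_integral_mono) (auto simp: ennreal_leI split: split_indicator)
  finally show ?thesis .
qed

lemma nn_integral_exp_neg:
  fixes a :: real
  assumes "a > 0"
  shows "(\<integral>\<^sup>+ t. ennreal (exp (- a * t)) * indicator {0..} t \<partial>lborel) = ennreal (1 / a)"
proof -
  have "(\<integral>\<^sup>+ t. ennreal (indicator {0..} t * exp (- a * t)) \<partial>lborel) = ennreal (exp (- a * 0) / a)"
    using has_integral_exp_minus_to_infinity[OF assms, of 0]
    by (intro nn_integral_has_integral_lebesgue) auto
  then show ?thesis
    by (simp add: mult.commute indicator_mult_ennreal)
qed

lemma mult_le_if_powr_mult_le:
  fixes a b c p :: real
  assumes "0 \<le> a" "0 \<le> b" "0 \<le> c" "p > 0" "c powr p * a powr p \<le> b powr p"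
  shows "c * a \<le> b"
proof (rule ccontr)
  assume "\<not> c * a \<le> b"
  then have "b powr p < (c * a) powr p"
    using assms by (intro powr_less_mono2) auto
  then show False using assms by (simp add: powr_mult)
qed

lemma half_power_floor_le_exp:
  fixes t T :: real
  assumes "T > 0" "t \<ge> 0"
  shows "(1/2) ^ nat \<lfloor>t / T\<rfloor> \<le> 2 * exp (- (ln 2 / T) * t)"
proof -
  define n where "n = nat \<lfloor>t / T\<rfloor>"
  have "t / T < real n + 1"
    using assms unfolding n_def by linarith
  then have "t < (real n + 1) * T"
    using assms by (simp add: divide_less_eq)
  then have "(ln 2 / T) * t \<le> (ln 2 / T) * ((real n + 1) * T)"
    using assms by (intro mult_left_mono) auto
  then have "exp (- (ln 2 / T) * ((real n + 1) * T)) \<le> exp (- (ln 2 / T) * t)"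
    by simp
  also have "- (ln 2 / T) * ((real n + 1) * T) = real (Suc n) * (- ln 2)"
    using assms by (simp add: field_simps)
  also have "exp (real (Suc n) * (- ln 2)) = exp (- ln 2) ^ Suc n"
    by (rule exp_of_nat_mult)
  finally have "(1/2) ^ Suc n \<le> exp (- (ln 2 / T) * t)"
    by (simp add: exp_minus)
  then show ?thesis unfolding n_def by simp
qed

lemma forward_complete_system_shift:
  "forward_complete_system S \<phi> \<Longrightarrow> \<sigma> \<in> S \<Longrightarrow> \<tau> \<ge> 0 \<Longrightarrow> shift \<tau> \<sigma> \<in> S"
  unfolding forward_complete_system_def by blast

lemma forward_complete_system_initial:
  "forward_complete_system S \<phi> \<Longrightarrow> \<sigma> \<in> S \<Longrightarrow> \<phi> 0 x \<sigma> = x"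
  unfolding forward_complete_system_def by blast

lemma forward_complete_system_continuous:
  "forward_complete_system S \<phi> \<Longrightarrow> \<sigma> \<in> S \<Longrightarrow> continuous_on {0..} (\<lambda>t. \<phi> t x \<sigma>)"
  unfolding forward_complete_system_def by blast

lemma forward_complete_system_restart:
  assumes "forward_complete_system S \<phi>" "\<sigma> \<in> S" "0 \<le> \<tau>" "\<tau> \<le> t"
  shows "\<phi> t x \<sigma> = \<phi> (t - \<tau>) (\<phi> \<tau> x \<sigma>) (shift \<tau> \<sigma>)"
proof -
  have "\<forall>t\<ge>0. \<forall>\<tau>\<ge>0. \<forall>x. \<forall>\<sigma>\<in>S. \<phi> \<tau> (\<phi> t x \<sigma>) (shift t \<sigma>) = \<phi> (t + \<tau>) x \<sigma>"
    using assms(1) unfolding forward_complete_system_def by blast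
  then have "\<phi> (t - \<tau>) (\<phi> \<tau> x \<sigma>) (shift \<tau> \<sigma>) = \<phi> (\<tau> + (t - \<tau>)) x \<sigma>"
    using assms(2-4) by simp
  then show ?thesis by simp
qed

context
  fixes S :: "(real \<Rightarrow> 'q) set" and \<phi> :: "real \<Rightarrow> 'a::banach \<Rightarrow> (real \<Rightarrow> 'q) \<Rightarrow> 'a"
    and r T :: real
  assumes sys: "forward_complete_system S \<phi>" and T: "T > 0"
    and halving: "\<And>y \<sigma>. norm y \<le> r \<Longrightarrow> \<sigma> \<in> S \<Longrightarrow> norm (\<phi> T y \<sigma>) \<le> norm y / 2"
begin

lemma halving_iterate:
  assumes "norm y \<le> r" "\<sigma> \<in> S"
  shows "norm (\<phi> (real n * T) y \<sigma>) \<le> (1/2) ^ n * norm y"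
  using assms
proof (induction n arbitrary: y \<sigma>)
  case 0
  then show ?case using forward_complete_system_initial[OF sys] by simp
next
  case (Suc n)
  have half: "norm (\<phi> T y \<sigma>) \<le> norm y / 2" using halving Suc.prems by blast
  then have "norm (\<phi> T y \<sigma>) \<le> r" using Suc.prems norm_ge_zero[of y] by linarith
  moreover have "shift T \<sigma> \<in> S" using forward_complete_system_shift[OF sys Suc.prems(2)] T by simp
  moreover have "\<phi> (real (Suc n) * T) y \<sigma> = \<phi> (real n * T) (\<phi> T y \<sigma>) (shift T \<sigma>)"
    using forward_complete_system_restart[OF sys Suc.prems(2), of T "real (Suc n) * T"] T
    by (simp add: algebra_simps)
  ultimately have "norm (\<phi> (real (Suc n) * T) y \<sigma>) \<le> (1/2) ^ n * norm (\<phi> T y \<sigma>)"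
    using Suc.IH by simp
  also have "\<dots> \<le> (1/2) ^ n * (norm y / 2)" using half by (intro mult_left_mono) auto
  finally show ?case by simp
qed

lemma exponential_decay_if_halving:
  assumes C: "C \<ge> 0"
    and bounded: "\<And>y \<sigma> t. norm y \<le> r \<Longrightarrow> \<sigma> \<in> S \<Longrightarrow> t \<ge> 0 \<Longrightarrow> norm (\<phi> t y \<sigma>) \<le> C * norm y"
    and x: "norm x \<le> r" and \<sigma>: "\<sigma> \<in> S" and t: "t \<ge> 0"
  shows "norm (\<phi> t x \<sigma>) \<le> 2 * C * exp (- (ln 2 / T) * t) * norm x"
proof -
  define n where "n = nat \<lfloor>t / T\<rfloor>"
  have nT: "0 \<le> real n * T" "real n * T \<le> t"
  proof -
    have "real n \<le> t / T" using t T unfolding n_def by (simp add: of_nat_nat)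
    then show "0 \<le> real n * T" "real n * T \<le> t" using T by (auto simp: le_divide_eq)
  qed
  have decayed: "norm (\<phi> (real n * T) x \<sigma>) \<le> (1/2) ^ n * norm x"
    using halving_iterate[OF x \<sigma>] .
  also have "\<dots> \<le> norm x" by (simp add: mult_left_le_one_le power_le_one)
  finally have "norm (\<phi> (real n * T) x \<sigma>) \<le> r" using x by linarith
  moreover have "\<phi> t x \<sigma> = \<phi> (t - real n * T) (\<phi> (real n * T) x \<sigma>) (shift (real n * T) \<sigma>)"
    using forward_complete_system_restart[OF sys \<sigma> nT] .
  ultimately have "norm (\<phi> t x \<sigma>) \<le> C * norm (\<phi> (real n * T) x \<sigma>)"
    using bounded forward_complete_system_shift[OF sys \<sigma> nT(1)] nT(2) by simp
  also have "\<dots> \<le> C * ((1/2) ^ n * norm x)" using decayed C by (intro mult_left_mono)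
  also have "\<dots> \<le> C * (2 * exp (- (ln 2 / T) * t) * norm x)"
    using half_power_floor_le_exp[OF T t] C unfolding n_def by (intro mult_left_mono mult_right_mono) auto
  finally show ?thesis by simp
qed

end

lemma nondecr_nonneg_nonneg: "nondecr_nonneg k \<Longrightarrow> 0 \<le> r \<Longrightarrow> 0 \<le> k r"
  unfolding nondecr_nonneg_def by blast

lemma nondecr_nonneg_mono: "nondecr_nonneg k \<Longrightarrow> 0 \<le> r \<Longrightarrow> r \<le> s \<Longrightarrow> k r \<le> k s"
  unfolding nondecr_nonneg_def by (auto intro: mono_onD)

lemma integral_bound_on_ball:
  assumes integral: "integral_bound S \<phi> p k" and k: "nondecr_nonneg k" and p: "p > 0"
    and y: "norm y \<le> \<rho>" and \<sigma>: "\<sigma> \<in> S"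
  shows "(\<integral>\<^sup>+ t \<in> {0..}. ennreal (norm (\<phi> t y \<sigma>) powr p) \<partial>lborel) \<le> ennreal ((k \<rho> * norm y) powr p)"
proof -
  have "k (norm y) \<le> k \<rho>" "0 \<le> k (norm y)"
    using nondecr_nonneg_mono[OF k norm_ge_zero y] nondecr_nonneg_nonneg[OF k norm_ge_zero] .
  then have "k (norm y) powr p * norm y powr p \<le> (k \<rho> * norm y) powr p"
    using p by (simp add: powr_mult mult_right_mono powr_mono2)
  then show ?thesis
    using integral \<sigma> unfolding integral_bound_def by (meson ennreal_leI order_trans)
qed

context
  fixes S :: "(real \<Rightarrow> 'q) set" and \<phi> :: "real \<Rightarrow> 'a::banach \<Rightarrow> (real \<Rightarrow> 'q) \<Rightarrow> 'a"
    and p :: real and k :: "real \<Rightarrow> real"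
  assumes sys: "forward_complete_system S \<phi>"
    and p: "p > 0" and k: "nondecr_nonneg k" and integral: "integral_bound S \<phi> p k"
begin

lemma small_value_in_window:
  assumes \<sigma>: "\<sigma> \<in> S" and h: "h > 0" and t: "h \<le> t" and y: "norm y \<le> \<rho>"
  obtains \<tau> where "\<tau> \<in> {t - h..t}" "norm (\<phi> \<tau> y \<sigma>) \<le> k \<rho> / h powr (1/p) * norm y"
proof -
  have "{t - h..t} \<subseteq> {0..}" using t by auto
  then have "continuous_on {t - h..t} (\<lambda>\<tau>. \<phi> \<tau> y \<sigma>)"
    by (rule continuous_on_subset[OF forward_complete_system_continuous[OF sys \<sigma>]])
  then have cont: "continuous_on {t - h..t} (\<lambda>\<tau>. norm (\<phi> \<tau> y \<sigma>))"
    by (rule continuous_on_norm)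
  have ne: "{t - h..t} \<noteq> {}" using h by simp
  from continuous_attains_inf[OF compact_Icc ne cont]
  obtain \<tau> where \<tau>: "\<tau> \<in> {t - h..t}"
    and min: "\<forall>s\<in>{t - h..t}. norm (\<phi> \<tau> y \<sigma>) \<le> norm (\<phi> s y \<sigma>)"
    by blast
  have "ennreal (norm (\<phi> \<tau> y \<sigma>) powr p * (t - (t - h)))
      \<le> (\<integral>\<^sup>+ s \<in> {0..}. ennreal (norm (\<phi> s y \<sigma>) powr p) \<partial>lborel)"
    using t h min p by (intro nn_integral_ge_on_interval powr_mono2) auto
  also have "\<dots> \<le> ennreal ((k \<rho> * norm y) powr p)"
    using integral_bound_on_ball[OF integral k p y \<sigma>] .
  finally have "h * norm (\<phi> \<tau> y \<sigma>) powr p \<le> (k \<rho> * norm y) powr p"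
    by (simp add: ennreal_le_iff mult.commute)
  moreover have "(h powr (1/p)) powr p = h"
    using h p by (simp add: powr_powr)
  ultimately have "(h powr (1/p)) powr p * norm (\<phi> \<tau> y \<sigma>) powr p \<le> (k \<rho> * norm y) powr p"
    by simp
  then have "h powr (1/p) * norm (\<phi> \<tau> y \<sigma>) \<le> k \<rho> * norm y"
    by (rule mult_le_if_powr_mult_le[rotated 4])
      (use p nondecr_nonneg_nonneg[OF k order_trans[OF norm_ge_zero y]] in auto)
  then have "norm (\<phi> \<tau> y \<sigma>) \<le> k \<rho> / h powr (1/p) * norm y"
    using h by (simp add: field_simps)
  with \<tau> show thesis by (rule that)
qed

context
  fixes t1 G0 :: real and \<beta> :: "real \<Rightarrow> real"
  assumes t1: "t1 > 0" and G0: "G0 > 0"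
    and \<beta>_K: "class_K \<beta>"
    and \<beta>_limsup: "Limsup (at_right 0) (\<lambda>r. ereal (\<beta> r / r)) < \<infinity>"
    and short_time: "\<And>t x \<sigma>. t \<in> {0..t1} \<Longrightarrow> \<sigma> \<in> S \<Longrightarrow> norm (\<phi> t x \<sigma>) \<le> G0 * \<beta> (norm x)"
begin

lemma uniform_linear_bound_on_ball:
  assumes \<rho>: "\<rho> \<ge> 0"
  obtains C where "C > 0"
    "\<And>y \<sigma> t. norm y \<le> \<rho> \<Longrightarrow> \<sigma> \<in> S \<Longrightarrow> t \<ge> 0 \<Longrightarrow> norm (\<phi> t y \<sigma>) \<le> C * norm y"
proof -
  define D where "D = k \<rho> / t1 powr (1/p)"
  have D: "D \<ge> 0" unfolding D_def using nondecr_nonneg_nonneg[OF k \<rho>] by simp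
  obtain L1 where L1: "L1 \<ge> 0" "\<And>s. 0 \<le> s \<Longrightarrow> s \<le> \<rho> \<Longrightarrow> \<beta> s \<le> L1 * s"
    using class_K_le_linear_on_bounded[OF \<beta>_K \<beta>_limsup] by blast
  obtain L2 where L2: "L2 \<ge> 0" "\<And>s. 0 \<le> s \<Longrightarrow> s \<le> D * \<rho> \<Longrightarrow> \<beta> s \<le> L2 * s"
    using class_K_le_linear_on_bounded[OF \<beta>_K \<beta>_limsup] by blast
  define C where "C = max 1 (max (G0 * L1) (G0 * L2 * D))"
  have "norm (\<phi> t y \<sigma>) \<le> C * norm y" if y: "norm y \<le> \<rho>" and \<sigma>: "\<sigma> \<in> S" and t: "t \<ge> 0" for y \<sigma> t
  proof (cases "t \<le> t1")
    case True
    then have "norm (\<phi> t y \<sigma>) \<le> G0 * \<beta> (norm y)" using short_time \<sigma> t by auto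
    also have "\<dots> \<le> G0 * L1 * norm y" using L1 y G0 by (simp add: mult_left_mono)
    also have "\<dots> \<le> C * norm y" unfolding C_def by (intro mult_right_mono) auto
    finally show ?thesis .
  next
    case False
    obtain \<tau> where \<tau>: "\<tau> \<in> {t - t1..t}" and small: "norm (\<phi> \<tau> y \<sigma>) \<le> D * norm y"
    proof (rule small_value_in_window[OF \<sigma> t1 _ y])
      show "t1 \<le> t" using False by simp
    qed (auto simp: D_def)
    have small_in_ball: "norm (\<phi> \<tau> y \<sigma>) \<le> D * \<rho>" using small D y by (meson mult_left_mono order_trans)
    have \<tau>0: "0 \<le> \<tau>" using \<tau> False by auto
    have "\<phi> t y \<sigma> = \<phi> (t - \<tau>) (\<phi> \<tau> y \<sigma>) (shift \<tau> \<sigma>)"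
      using \<tau> by (intro forward_complete_system_restart[OF sys \<sigma> \<tau>0]) simp
    then have "norm (\<phi> t y \<sigma>) \<le> G0 * \<beta> (norm (\<phi> \<tau> y \<sigma>))"
      using short_time[of "t - \<tau>" "shift \<tau> \<sigma>"] forward_complete_system_shift[OF sys \<sigma> \<tau>0] \<tau>
      by auto
    also have "\<dots> \<le> G0 * (L2 * norm (\<phi> \<tau> y \<sigma>))"
      using L2 small_in_ball G0 by (simp add: mult_left_mono)
    also have "\<dots> \<le> G0 * L2 * D * norm y"
      using small G0 L2 by (simp add: mult_left_mono mult.assoc)
    also have "\<dots> \<le> C * norm y" unfolding C_def by (intro mult_right_mono) auto
    finally show ?thesis .
  qed
  moreover have "C > 0" unfolding C_def by simp
  ultimately show thesis using that by blast
qed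

lemma halving_time:
  assumes r: "r > 0"
  obtains T where "T > 0" "\<And>y \<sigma>. norm y \<le> r \<Longrightarrow> \<sigma> \<in> S \<Longrightarrow> norm (\<phi> T y \<sigma>) \<le> norm y / 2"
proof -
  obtain C1 where C1: "C1 > 0"
    "\<And>y \<sigma> t. norm y \<le> r \<Longrightarrow> \<sigma> \<in> S \<Longrightarrow> t \<ge> 0 \<Longrightarrow> norm (\<phi> t y \<sigma>) \<le> C1 * norm y"
    using uniform_linear_bound_on_ball r by (metis less_le)
  obtain C2 where C2: "C2 > 0"
    "\<And>y \<sigma> t. norm y \<le> C1 * r \<Longrightarrow> \<sigma> \<in> S \<Longrightarrow> t \<ge> 0 \<Longrightarrow> norm (\<phi> t y \<sigma>) \<le> C2 * norm y"
    using uniform_linear_bound_on_ball C1(1) r by (metis less_le zero_less_mult_iff)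
  define K where "K = k r"
  have K: "K \<ge> 0" unfolding K_def using nondecr_nonneg_nonneg[OF k] r by simp
  define c where "c = 2 * C2 * (K + 1)"
  have c: "c > 0" unfolding c_def using C2 K by simp
  have "norm (\<phi> (c powr p) y \<sigma>) \<le> norm y / 2" if y: "norm y \<le> r" and \<sigma>: "\<sigma> \<in> S" for y \<sigma>
  proof -
    define a where "a = norm (\<phi> (c powr p) y \<sigma>)"
    \<comment> \<open>every earlier state lies in the ball of radius \<open>C1 r\<close>, on which \<open>C2\<close> bounds the flow\<close>
    have a_le: "a / C2 \<le> norm (\<phi> \<tau> y \<sigma>)" if \<tau>: "\<tau> \<in> {0..c powr p}" for \<tau>
    proof -
      have \<tau>0: "0 \<le> \<tau>" using \<tau> by simp
      have "norm (\<phi> \<tau> y \<sigma>) \<le> C1 * r"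
        using C1(2)[OF y \<sigma> \<tau>0] y C1(1) by (meson mult_left_mono less_imp_le order_trans)
      moreover have "\<phi> (c powr p) y \<sigma> = \<phi> (c powr p - \<tau>) (\<phi> \<tau> y \<sigma>) (shift \<tau> \<sigma>)"
        using \<tau> by (intro forward_complete_system_restart[OF sys \<sigma> \<tau>0]) simp
      ultimately have "a \<le> C2 * norm (\<phi> \<tau> y \<sigma>)"
        unfolding a_def using C2(2) forward_complete_system_shift[OF sys \<sigma> \<tau>0] \<tau> by simp
      then show ?thesis using C2(1) by (simp add: divide_le_eq mult.commute)
    qed
    have "ennreal ((a / C2) powr p * (c powr p - 0))
        \<le> (\<integral>\<^sup>+ \<tau> \<in> {0..}. ennreal (norm (\<phi> \<tau> y \<sigma>) powr p) \<partial>lborel)"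
      using a_le C2(1) p by (intro nn_integral_ge_on_interval powr_mono2) (auto simp: a_def)
    also have "\<dots> \<le> ennreal ((K * norm y) powr p)"
      unfolding K_def by (rule integral_bound_on_ball[OF integral k p y \<sigma>])
    finally have "c powr p * (a / C2) powr p \<le> (K * norm y) powr p"
      by (simp add: ennreal_le_iff mult.commute)
    then have "c * (a / C2) \<le> K * norm y"
      by (rule mult_le_if_powr_mult_le[rotated 4]) (use C2(1) c K p in \<open>auto simp: a_def\<close>)
    moreover have "c * (a / C2) = 2 * (K + 1) * a"
      unfolding c_def using C2(1) by simp
    ultimately have "2 * (K + 1) * a \<le> K * norm y" by simp
    also have "\<dots> \<le> (K + 1) * norm y" by (simp add: mult_right_mono)
    finally have "(K + 1) * (2 * a) \<le> (K + 1) * norm y" by (simp add: ac_simps)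
    then have "2 * a \<le> norm y" by (rule mult_left_le_imp_le) (use K in simp)
    then show ?thesis unfolding a_def by simp
  qed
  moreover have "c powr p > 0" using c by simp
  ultimately show thesis using that by blast
qed

lemma USGES_if_integral_bound: "USGES S \<phi>"
  unfolding USGES_def
proof (intro allI impI)
  fix r :: real
  assume r: "r > 0"
  obtain C where C: "C > 0"
    and bounded: "\<And>y \<sigma> t. norm y \<le> r \<Longrightarrow> \<sigma> \<in> S \<Longrightarrow> t \<ge> 0 \<Longrightarrow> norm (\<phi> t y \<sigma>) \<le> C * norm y"
    using uniform_linear_bound_on_ball r by (metis less_le)
  obtain T where T: "T > 0"
    and halving: "\<And>y \<sigma>. norm y \<le> r \<Longrightarrow> \<sigma> \<in> S \<Longrightarrow> norm (\<phi> T y \<sigma>) \<le> norm y / 2"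
    using halving_time[OF r] by blast
  have "norm (\<phi> t x \<sigma>) \<le> 2 * C * exp (- (ln 2 / T) * t) * norm x"
    if "t \<ge> 0" "norm x \<le> r" "\<sigma> \<in> S" for t x \<sigma>
    using exponential_decay_if_halving[OF sys T halving less_imp_le[OF C] bounded] that by blast
  moreover have "2 * C > 0" "ln 2 / T > 0" using C T by auto
  ultimately show "\<exists>M>0. \<exists>lam>0. \<forall>t\<ge>0. \<forall>x. norm x \<le> r \<longrightarrow>
      (\<forall>\<sigma>\<in>S. norm (\<phi> t x \<sigma>) \<le> M * exp (- lam * t) * norm x)"
    by blast
qed

end

end

lemma nn_integral_powr_le_if_exponential_bound:
  fixes f :: "real \<Rightarrow> 'a::real_normed_vector"
  assumes M: "M \<ge> 0" and c: "c \<ge> 0" and lam: "lam > 0" and p: "p > 0"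
    and bound: "\<And>t. t \<ge> 0 \<Longrightarrow> norm (f t) \<le> M * exp (- lam * t) * c"
  shows "(\<integral>\<^sup>+ t \<in> {0..}. ennreal (norm (f t) powr p) \<partial>lborel)
    \<le> ennreal (M powr p / (lam * p) * c powr p)"
proof -
  define A where "A = M powr p * c powr p"
  have "(\<integral>\<^sup>+ t \<in> {0..}. ennreal (norm (f t) powr p) \<partial>lborel)
      \<le> (\<integral>\<^sup>+ t. ennreal A * (ennreal (exp (- (lam * p) * t)) * indicator {0..} t) \<partial>lborel)"
  proof (rule nn_integral_mono)
    fix t :: real
    show "ennreal (norm (f t) powr p) * indicator {0..} t
        \<le> ennreal A * (ennreal (exp (- (lam * p) * t)) * indicator {0..} t)"
    proof (cases "t \<ge> 0")
      case True
      have "norm (f t) powr p \<le> (M * exp (- lam * t) * c) powr p"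
        using bound[OF True] p by (intro powr_mono2) auto
      also have "\<dots> = A * exp (- (lam * p) * t)"
        unfolding A_def using M c by (simp add: powr_mult exp_powr_real ac_simps)
      finally show ?thesis
        using True by (simp add: ennreal_mult[symmetric] A_def ennreal_leI)
    qed simp
  qed
  also have "\<dots> = ennreal A * ennreal (1 / (lam * p))"
    using nn_integral_exp_neg[of "lam * p"] lam p by (simp add: nn_integral_cmult)
  also have "\<dots> = ennreal (M powr p / (lam * p) * c powr p)"
    unfolding A_def using lam p by (simp add: ennreal_mult[symmetric])
  finally show ?thesis .
qed

lemma nondecr_nonneg_staircase:
  fixes c :: "nat \<Rightarrow> real"
  assumes c: "\<And>n. c n \<ge> 0"
  shows "nondecr_nonneg (\<lambda>s. \<Sum>i\<le>nat \<lceil>s\<rceil>. c i)"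
  unfolding nondecr_nonneg_def
proof
  show "mono_on {0..} (\<lambda>s::real. \<Sum>i\<le>nat \<lceil>s\<rceil>. c i)"
  proof (rule mono_onI)
    fix a b :: real
    assume "a \<in> {0..}" "b \<in> {0..}" "a \<le> b"
    then have "nat \<lceil>a\<rceil> \<le> nat \<lceil>b\<rceil>" by (intro nat_mono ceiling_mono)
    then show "(\<Sum>i\<le>nat \<lceil>a\<rceil>. c i) \<le> (\<Sum>i\<le>nat \<lceil>b\<rceil>. c i)"
      using c by (intro sum_mono2) auto
  qed
  show "\<forall>r::real\<ge>0. 0 \<le> (\<Sum>i\<le>nat \<lceil>r\<rceil>. c i)" using c by (simp add: sum_nonneg)
qed

lemma integral_bound_if_USGES:
  fixes S :: "(real \<Rightarrow> 'q) set" and \<phi> :: "real \<Rightarrow> 'a::real_normed_vector \<Rightarrow> (real \<Rightarrow> 'q) \<Rightarrow> 'a"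
  assumes USGES: "USGES S \<phi>" and p: "p > 0"
  obtains k where "nondecr_nonneg k" "integral_bound S \<phi> p k"
proof -
  have "\<forall>n::nat. \<exists>M>0. \<exists>lam>0. \<forall>t\<ge>0. \<forall>x. norm x \<le> real n + 1 \<longrightarrow>
      (\<forall>\<sigma>\<in>S. norm (\<phi> t x \<sigma>) \<le> M * exp (- lam * t) * norm x)"
    using USGES unfolding USGES_def by (metis add_nonneg_pos of_nat_0_le_iff zero_less_one)
  then obtain M lam where M: "\<And>n. M n > 0" and lam: "\<And>n. lam n > 0"
    and decay: "\<And>n t x \<sigma>. t \<ge> 0 \<Longrightarrow> norm x \<le> real n + 1 \<Longrightarrow> \<sigma> \<in> S \<Longrightarrow>
        norm (\<phi> t x \<sigma>) \<le> M n * exp (- lam n * t) * norm x"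
    by metis
  define c where "c n = (M n powr p / (lam n * p)) powr (1/p)" for n
  have c: "c n \<ge> 0" for n unfolding c_def by simp
  define k :: "real \<Rightarrow> real" where "k s = (\<Sum>i\<le>nat \<lceil>s\<rceil>. c i)" for s
  have "integral_bound S \<phi> p k"
    unfolding integral_bound_def
  proof (intro allI ballI)
    fix x :: 'a and \<sigma>
    assume \<sigma>: "\<sigma> \<in> S"
    define n where "n = nat \<lceil>norm x\<rceil>"
    have "norm x \<le> real n + 1" unfolding n_def by linarith
    then have "(\<integral>\<^sup>+ t \<in> {0..}. ennreal (norm (\<phi> t x \<sigma>) powr p) \<partial>lborel)
        \<le> ennreal (M n powr p / (lam n * p) * norm x powr p)"
      using M[of n] lam[of n] p decay \<sigma>
      by (intro nn_integral_powr_le_if_exponential_bound) (auto simp: less_imp_le)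
    also have "M n powr p / (lam n * p) = c n powr p"
      unfolding c_def using M[of n] lam[of n] p by (simp add: powr_powr)
    also have "c n \<le> k (norm x)"
      unfolding k_def n_def using c by (intro member_le_sum) auto
    then have "c n powr p * norm x powr p \<le> k (norm x) powr p * norm x powr p"
      using c p by (intro mult_right_mono powr_mono2) auto
    finally show "(\<integral>\<^sup>+ t \<in> {0..}. ennreal (norm (\<phi> t x \<sigma>) powr p) \<partial>lborel)
        \<le> ennreal (k (norm x) powr p * norm x powr p)"
      by (simp add: ennreal_leI order_trans)
  qed
  with nondecr_nonneg_staircase[OF c] show thesis
    unfolding k_def by (rule that)
qed

theorem theorem2:
  fixes S :: "(real \<Rightarrow> 'q) set"
    and \<phi> :: "real \<Rightarrow> 'a::banach \<Rightarrow> (real \<Rightarrow> 'q) \<Rightarrow> 'a"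
    and t1 G0 :: real and \<beta> :: "real \<Rightarrow> real"
  assumes sys: "forward_complete_system S \<phi>"
    and t1: "t1 > 0" and G0: "G0 > 0"
    and beta: "class_Kinf \<beta>"
    and beta_lim: "Limsup (at_right 0) (\<lambda>r. ereal (\<beta> r / r)) < \<infinity>"
    and bound: "\<And>t x \<sigma>. t \<in> {0..t1} \<Longrightarrow> \<sigma> \<in> S \<Longrightarrow> norm (\<phi> t x \<sigma>) \<le> G0 * \<beta> (norm x)"
  shows "(USGES S \<phi> \<longleftrightarrow> (\<forall>p>0. \<exists>k. nondecr_nonneg k \<and> integral_bound S \<phi> p k))
       \<and> ((\<forall>p>0. \<exists>k. nondecr_nonneg k \<and> integral_bound S \<phi> p k)
            \<longleftrightarrow> (\<exists>p>0. \<exists>k. nondecr_nonneg k \<and> integral_bound S \<phi> p k))"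
proof -
  let ?ii = "\<forall>p>0. \<exists>k. nondecr_nonneg k \<and> integral_bound S \<phi> p k"
  let ?iii = "\<exists>p>0. \<exists>k. nondecr_nonneg k \<and> integral_bound S \<phi> p k"
  have i_ii: "?ii" if "USGES S \<phi>"
    using integral_bound_if_USGES[OF that] by metis
  have "class_K \<beta>" using beta unfolding class_Kinf_def by simp
  then have iii_i: "USGES S \<phi>" if ?iii
    using that USGES_if_integral_bound[OF sys _ _ _ t1 G0 _ beta_lim bound] by blast
  have "?ii \<Longrightarrow> ?iii" using zero_less_one by blast
  with i_ii iii_i show ?thesis by blast
qed

end
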